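(* Let $N$ be large enough that $g(N)<N$, $(N-1)\sqrt{\frac{\ln N}{N}}\ge\frac{8h}{\sqrt5}$, and $\left(N-\frac32\right)\ln\left(1+\sqrt{\frac{5\ln N}{N}}\right)\ge8h$. Then in any round $r$, with probability at least $1-\frac{6M+3}{N^{10}}$, $$\xi_0\ge1-\sqrt{\frac{5\ln N}{N}}\qquad\text{and}\qquad\xi_1\le1+\sqrt{\frac{5\ln N}{N}},$$ where $\xi_0=\left(1-\frac{2}{N^2+1}\right)^{V^r_i}\left(1-\frac{2}{N^3-N^2+1}\right)^{V^r-V^r_i}$ and $\xi_1=\left(1+\frac{2}{N^2-1}\right)^{V^r_i}\left(1+\frac{2}{N^3-N^2-1}\right)^{V^r-V^r_i}$.
   Context: Setting. $\mathcal G=(\mathcal N,\mathcal E)$ is a connected, non-bipartite undirected graph on agents $\mathcal N=\{1,\dots,N\}$; $\mathcal N_i$ is the neighbor set of $i$, $N_i=|\mathcal N_i|$. There are $M$ options; quality signals $\Phi_j^r\in\{0,1\}$ are i.i.d. Bernoulli$(\eta_j)$ over rounds. $X^r_{i,j}\in\{0,1\}$ indicates agent $i$ adopts option $j$ in round $r$ ($\sum_jX^r_{i,j}\le1$). The function $g:\mathbb N^+\to\mathbb R$ satisfies: for every $\ell>0$, $g(N)>\ell\ln N$ and $g(N)<\ell N$ for all sufficiently large $N$. Parameters: $\varepsilon>0$, $\mu\in(0,1)$, $\beta\in(1/2,1)$, $\sigma\ge11$, $h=16\sigma/(1-\beta)$. Metropolis–Hastings random walk: from $i$ move to $i'\in\mathcal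 N_i$ with probability $\min\{1/N_i,1/N_{i'}\}$, else stay; walk length $L=O(\log N)$ chosen so that the endpoint is at each agent with probability in $[\frac1N-\frac1{N^3},\frac1N+\frac1{N^3}]$. Round $r$: (1) an agent that adopted an option in round $r-1$ perturbs each coordinate of its adoption vector independently (keep with probability $\frac{e^{\varepsilon/2}}{e^{\varepsilon/2}+1}$, flip otherwise); (2) each such agent launches $hg(N)$ independent random-walk tokens of length $L$ carrying its perturbed vector (forwarded via per-agent FIFO queues, up to $hg(N)$ tokens per agent per slot); a token is sampled by the agent where it ends; $V^r$ is the total number of tokens and $V^r_i$ the number sampled by $i$; (3) with $\Lambda^r_{i,j}$ the fraction of $i$'s sampled vectors with $j$-th coordinate $1$, $\widetilde Q^r_{i,j}=\max\{\frac{e^{\varepsilon/2}+1}{e^{\varepsilon/2}-1}\Lambda^r_{i,j}-\frac1{e^{\varepsilon/2}-1},0\}$, $\widehat Q^r_{i,j}=\widetilde Q^r_{i,j}/\sum_{j'}\widetilde Q^r_{i,j'}$, and $i$ selects option $j$ with probability $(1-\mu)\widehat Q^r_{i,j}+\mu/M$; (4) having selected $j^*$, $i$ adopts it with probability $\beta$ if $\Phi^r_{j^*}=1$, $1-\beta$ if $\Phi^r_{j^*}=0$, else adopts nothing. *)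

theory Defs
  imports "HOL-Probability.Probability" "HOL-Library.FuncSet"
begin

text \<open>Agents are 1..N; the undirected graph is a symmetric irreflexive relation E on them.\<close>
definition agents :: "nat \<Rightarrow> nat set" where
  "agents N = {1..N}"

definition nbrs :: "(nat \<Rightarrow> nat \<Rightarrow> bool) \<Rightarrow> nat \<Rightarrow> nat \<Rightarrow> nat set" where
  "nbrs E N i = {j \<in> agents N. E i j}"

definition deg :: "(nat \<Rightarrow> nat \<Rightarrow> bool) \<Rightarrow> nat \<Rightarrow> nat \<Rightarrow> nat" where
  "deg E N i = card (nbrs E N i)"

definition graph_connected :: "(nat \<Rightarrow> nat \<Rightarrow> bool) \<Rightarrow> nat \<Rightarrow> bool" where
  "graph_connected E N = (\<forall>a\<in>agents N. \<forall>b\<in>agents N. E\<^sup>*\<^sup>* a b)"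

definition graph_bipartite :: "(nat \<Rightarrow> nat \<Rightarrow> bool) \<Rightarrow> nat \<Rightarrow> bool" where
  "graph_bipartite E N =
     (\<exists>c :: nat \<Rightarrow> bool. \<forall>a\<in>agents N. \<forall>b\<in>agents N. E a b \<longrightarrow> c a \<noteq> c b)"

definition mh_P :: "(nat \<Rightarrow> nat \<Rightarrow> bool) \<Rightarrow> nat \<Rightarrow> nat \<Rightarrow> nat \<Rightarrow> real" where
  "mh_P E N i j =
     (if i \<noteq> j \<and> j \<in> nbrs E N i then min (1 / real (deg E N i)) (1 / real (deg E N j))
      else if i = j then 1 - (\<Sum>k\<in>nbrs E N i. min (1 / real (deg E N i)) (1 / real (deg E N k)))
      else 0)"

fun walkprob :: "(nat \<Rightarrow> nat \<Rightarrow> bool) \<Rightarrow> nat \<Rightarrow> nat \<Rightarrow> nat \<Rightarrow> nat \<Rightarrow> real" where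
  "walkprob E N 0 i j = (if i = j then 1 else 0)"
| "walkprob E N (Suc n) i j = (\<Sum>k\<in>agents N. walkprob E N n i k * mh_P E N k j)"

text \<open>Tokens of a round: each adopter s in S launches K tokens (s,0),...,(s,K-1).\<close>
definition tokens :: "nat set \<Rightarrow> nat \<Rightarrow> (nat \<times> nat) set" where
  "tokens S K = S \<times> {..<K}"

text \<open>Probability (over the independent length-L walks of all tokens) that the
  endpoint assignment f (token \<mapsto> agent where it is sampled) satisfies P.\<close>
definition ends_prob ::
  "(nat \<Rightarrow> nat \<Rightarrow> bool) \<Rightarrow> nat \<Rightarrow> nat \<Rightarrow> nat set \<Rightarrow> nat \<Rightarrow> ((nat \<times> nat \<Rightarrow> nat) \<Rightarrow> bool) \<Rightarrow> real"
  where
  "ends_prob E N L S K P =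
     (\<Sum>f \<in> tokens S K \<rightarrow>\<^sub>E agents N.
        (\<Prod>t\<in>tokens S K. walkprob E N L (fst t) (f t)) * (if P f then 1 else 0))"

definition xi0 :: "nat \<Rightarrow> nat \<Rightarrow> nat \<Rightarrow> real" where
  "xi0 N V Vi = (1 - 2 / (real N ^ 2 + 1)) ^ Vi * (1 - 2 / (real N ^ 3 - real N ^ 2 + 1)) ^ (V - Vi)"

definition xi1 :: "nat \<Rightarrow> nat \<Rightarrow> nat \<Rightarrow> real" where
  "xi1 N V Vi = (1 + 2 / (real N ^ 2 - 1)) ^ Vi * (1 + 2 / (real N ^ 3 - real N ^ 2 - 1)) ^ (V - Vi)"

end

theory Submission
  imports Defs
begin

text \<open>
Each of the V tokens ends at agent i with probability at most 1/N + 1/N^3, and V is at most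
(h N + 1) N because g(N) < N, so the expected number V_i of tokens sampled by i is about h N.
The walks are independent, so the exponential moment of V_i factorises and Markov's inequality
gives V_i <= 2 h N except with probability at most N^-10, which is below the claimed (6M+3)/N^10.
On that event Bernoulli's inequality and 1 + c <= e^c reduce both bounds on xi_0 and xi_1 to
V_i 2/(N^2-1) + V 2/(N^3-N^2-1) <= 8h/(N-1), and the conditions on N make 8h/(N-1) at most
sqrt(5 ln N / N) and ln(1 + sqrt(5 ln N / N)).
Connectivity, non-bipartiteness and the growth conditions on g are not used here: they only
serve to justify the mixing hypothesis.
\<close>

lemma mh_P_row_sum:
  assumes "\<And>a. \<not> E a a" and "k \<in> agents N"
  shows "(\<Sum>j\<in>agents N. mh_P E N k j) = 1"
proof -
  have fin: "finite (agents N)" by (simp add: agents_def)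
  have nbrs: "nbrs E N k \<subseteq> agents N - {k}" using assms(1) by (auto simp: nbrs_def)
  have "(\<Sum>j\<in>agents N - {k}. mh_P E N k j)
      = (\<Sum>j\<in>agents N - {k}. if j \<in> nbrs E N k then min (1 / real (deg E N k)) (1 / real (deg E N j)) else 0)"
    by (intro sum.cong) (auto simp: mh_P_def)
  also have "\<dots> = (\<Sum>j\<in>nbrs E N k. min (1 / real (deg E N k)) (1 / real (deg E N j)))"
    using nbrs fin by (simp add: sum.If_cases Int_absorb1)
  finally show ?thesis
    using assms(2) fin by (simp add: sum.remove mh_P_def)
qed

lemma walkprob_row_sum:
  assumes "\<And>a. \<not> E a a" and "s \<in> agents N"
  shows "(\<Sum>j\<in>agents N. walkprob E N n s j) = 1"
proof (induction n)
  case 0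
  show ?case using assms(2) by (simp add: agents_def)
next
  case (Suc n)
  have "(\<Sum>j\<in>agents N. walkprob E N (Suc n) s j)
      = (\<Sum>k\<in>agents N. walkprob E N n s k * (\<Sum>j\<in>agents N. mh_P E N k j))"
    unfolding walkprob.simps sum_distrib_left by (rule sum.swap)
  also have "\<dots> = (\<Sum>k\<in>agents N. walkprob E N n s k)"
    using mh_P_row_sum[of E] assms(1) by simp
  finally show ?case using Suc by simp
qed

lemma chernoff_PiE_count:
  fixes w :: "'a \<Rightarrow> 'b \<Rightarrow> real" and \<theta> T :: real
  assumes fin: "finite I" "finite A" and "i \<in> A" and "0 \<le> \<theta>"
    and nonneg: "\<And>t j. t \<in> I \<Longrightarrow> j \<in> A \<Longrightarrow> 0 \<le> w t j"
    and row_sum: "\<And>t. t \<in> I \<Longrightarrow> (\<Sum>j\<in>A. w t j) = 1"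
    and P: "\<And>f. f \<in> I \<rightarrow>\<^sub>E A \<Longrightarrow> real (card {t\<in>I. f t = i}) \<le> T \<Longrightarrow> P f"
  shows "1 - exp ((exp \<theta> - 1) * (\<Sum>t\<in>I. w t i) - \<theta> * T)
           \<le> (\<Sum>f\<in>I \<rightarrow>\<^sub>E A. (\<Prod>t\<in>I. w t (f t)) * (if P f then 1 else 0))"
proof -
  define W where "W f = (\<Prod>t\<in>I. w t (f t))" for f
  define count where "count f = (\<Sum>t\<in>I. if f t = i then 1 else 0 :: real)" for f
  have W_nonneg: "0 \<le> W f" if "f \<in> I \<rightarrow>\<^sub>E A" for f
    unfolding W_def using that nonneg by (intro prod_nonneg) auto
  have W_total: "(\<Sum>f\<in>I \<rightarrow>\<^sub>E A. W f) = 1"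
    unfolding W_def using prod_sum_PiE[OF fin(1), of "\<lambda>_. A" w] fin row_sum by simp
  have count_card: "count f = real (card {t\<in>I. f t = i})" for f
    using fin(1) by (simp add: count_def sum.If_cases Collect_conj_eq Int_commute)
  \<comment> \<open>Markov's inequality for the moment generating function of the count\<close>
  have "(\<Sum>f\<in>I \<rightarrow>\<^sub>E A. W f * (if P f then 0 else 1))
      \<le> (\<Sum>f\<in>I \<rightarrow>\<^sub>E A. W f * exp (\<theta> * count f - \<theta> * T))"
  proof (intro sum_mono)
    fix f assume f: "f \<in> I \<rightarrow>\<^sub>E A"
    have "\<not> P f \<Longrightarrow> \<theta> * T \<le> \<theta> * count f"
      using P[OF f] \<open>0 \<le> \<theta>\<close> by (force simp: count_card intro: mult_left_mono)
    then have "\<not> P f \<Longrightarrow> 1 \<le> exp (\<theta> * count f - \<theta> * T)" by simp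
    then show "W f * (if P f then 0 else 1) \<le> W f * exp (\<theta> * count f - \<theta> * T)"
      using W_nonneg[OF f] mult_left_mono[of 1 "exp (\<theta> * count f - \<theta> * T)" "W f"] by auto
  qed
  also have "\<dots> = exp (- \<theta> * T) * (\<Prod>t\<in>I. \<Sum>j\<in>A. w t j * exp (\<theta> * (if j = i then 1 else 0)))"
    unfolding prod_sum_PiE[OF fin(1) fin(2)] W_def count_def
    by (simp add: sum_distrib_left sum_distrib_right exp_diff exp_sum[OF fin(1)] prod.distrib
        exp_minus field_simps)
  also have "\<dots> \<le> exp (- \<theta> * T) * (\<Prod>t\<in>I. exp ((exp \<theta> - 1) * w t i))"
  proof (intro mult_left_mono prod_mono conjI)
    fix t assume t: "t \<in> I"
    have "(\<Sum>j\<in>A. w t j * exp (\<theta> * (if j = i then 1 else 0)))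
        = (\<Sum>j\<in>A. w t j + (if j = i then (exp \<theta> - 1) * w t j else 0))"
      by (intro sum.cong) (auto simp: algebra_simps)
    also have "\<dots> = 1 + (exp \<theta> - 1) * w t i"
      using row_sum[OF t] \<open>i \<in> A\<close> fin by (simp add: sum.distrib)
    also have "\<dots> \<le> exp ((exp \<theta> - 1) * w t i)" by (rule exp_ge_add_one_self)
    finally show "(\<Sum>j\<in>A. w t j * exp (\<theta> * (if j = i then 1 else 0))) \<le> exp ((exp \<theta> - 1) * w t i)" .
    show "0 \<le> (\<Sum>j\<in>A. w t j * exp (\<theta> * (if j = i then 1 else 0)))"
      using nonneg t by (auto intro!: sum_nonneg)
  qed simp
  also have "\<dots> = exp ((exp \<theta> - 1) * (\<Sum>t\<in>I. w t i) - \<theta> * T)"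
    by (simp add: exp_sum[OF fin(1), symmetric] sum_distrib_left exp_add[symmetric])
  finally have "(\<Sum>f\<in>I \<rightarrow>\<^sub>E A. W f * (if P f then 0 else 1))
      \<le> exp ((exp \<theta> - 1) * (\<Sum>t\<in>I. w t i) - \<theta> * T)" .
  moreover have "(\<Sum>f\<in>I \<rightarrow>\<^sub>E A. W f * (if P f then 1 else 0))
      = (\<Sum>f\<in>I \<rightarrow>\<^sub>E A. W f) - (\<Sum>f\<in>I \<rightarrow>\<^sub>E A. W f * (if P f then 0 else 1))"
    by (simp add: sum_subtractf[symmetric]; intro sum.cong; simp)
  ultimately show ?thesis using W_total unfolding W_def by linarith
qed

lemma one_minus_power_mult_ge:
  fixes a b :: real
  assumes "0 \<le> a" "a \<le> 1" "0 \<le> b" "b \<le> 1"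
  shows "1 - (real m * a + real n * b) \<le> (1 - a) ^ m * (1 - b) ^ n"
proof -
  have "1 - real m * a \<le> (1 - a) ^ m" "1 - real n * b \<le> (1 - b) ^ n"
    using Bernoulli_inequality[of "- a" m] Bernoulli_inequality[of "- b" n] assms by auto
  moreover have "0 \<le> (1 - (1 - a) ^ m) * (1 - (1 - b) ^ n)"
    using assms by (intro mult_nonneg_nonneg) (auto intro: power_le_one)
  ultimately show ?thesis by (simp add: algebra_simps)
qed

lemma one_plus_power_mult_le_exp:
  fixes c d :: real
  assumes "0 \<le> c" "0 \<le> d"
  shows "(1 + c) ^ m * (1 + d) ^ n \<le> exp (real m * c + real n * d)"
proof -
  have "(1 + c) ^ m * (1 + d) ^ n \<le> exp c ^ m * exp d ^ n"
    using assms by (intro mult_mono power_mono) auto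
  then show ?thesis by (simp add: exp_add exp_of_nat_mult)
qed

lemma token_weight_bound:
  fixes x h u v :: real
  assumes x: "10 \<le> x" and h: "1 \<le> h" and u: "0 \<le> u" "u \<le> 2 * h * x"
    and v: "0 \<le> v" "v \<le> (h * x + 1) * x"
  shows "u * (2 / (x\<^sup>2 - 1)) + v * (2 / (x ^ 3 - x\<^sup>2 - 1)) \<le> 8 * h / (x - 1)"
proof -
  have x2: "100 \<le> x\<^sup>2" using x mult_mono[OF x x] by (simp add: power2_eq_square)
  have x3: "10 * x\<^sup>2 \<le> x ^ 3"
    using mult_right_mono[OF x, of "x\<^sup>2"] by (simp add: power3_eq_cube power2_eq_square)
  have "2 / (x\<^sup>2 - 1) \<le> 5 / (2 * x\<^sup>2)" using x2 by (simp add: divide_simps)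
  then have "u * (2 / (x\<^sup>2 - 1)) \<le> 2 * h * x * (5 / (2 * x\<^sup>2))"
    using u x2 by (intro mult_mono) auto
  also have "\<dots> = 5 * h / x" using x by (simp add: field_simps power2_eq_square)
  finally have U: "u * (2 / (x\<^sup>2 - 1)) \<le> 5 * h / x" .
  have "2 / (x ^ 3 - x\<^sup>2 - 1) \<le> 3 / x ^ 3" using x x2 x3 by (simp add: divide_simps)
  then have "v * (2 / (x ^ 3 - x\<^sup>2 - 1)) \<le> (h * x + 1) * x * (3 / x ^ 3)"
    using v x2 x3 by (intro mult_mono) auto
  also have "\<dots> = 3 * h / x + 3 / x\<^sup>2" using x by (simp add: field_simps power2_eq_square power3_eq_cube)
  finally have V: "v * (2 / (x ^ 3 - x\<^sup>2 - 1)) \<le> 3 * h / x + 3 / x\<^sup>2" .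
  have "3 * x \<le> 8 * h * x + 3" using x mult_right_mono[OF h, of x] by linarith
  then have "8 * h / x + 3 / x\<^sup>2 \<le> 8 * h / (x - 1)"
    using x by (simp add: field_simps power2_eq_square)
  then show ?thesis using U V by (simp add: add_divide_distrib[symmetric])
qed

lemma xi0_xi1_bounds:
  fixes N V Vi :: nat and h s :: real
  assumes N: "10 \<le> real N" and h: "1 \<le> h" and Vi: "real Vi \<le> 2 * h * real N" "Vi \<le> V"
    and V: "real V \<le> (h * real N + 1) * real N"
    and s: "8 * h / (real N - 1) \<le> s" "8 * h / (real N - 1) \<le> ln (1 + s)"
  shows "1 - s \<le> xi0 N V Vi" and "xi1 N V Vi \<le> 1 + s"
proof -
  define x where "x = real N"
  define a where "a = 2 / (x\<^sup>2 + 1)"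
  define b where "b = 2 / (x ^ 3 - x\<^sup>2 + 1)"
  define c where "c = 2 / (x\<^sup>2 - 1)"
  define d where "d = 2 / (x ^ 3 - x\<^sup>2 - 1)"
  have x2: "100 \<le> x\<^sup>2" using N mult_mono[OF N N] by (simp add: x_def power2_eq_square)
  have x3: "10 * x\<^sup>2 \<le> x ^ 3"
    using mult_right_mono[OF N, of "x\<^sup>2"] by (simp add: x_def power3_eq_cube power2_eq_square)
  have ab: "0 \<le> a" "a \<le> c" "0 \<le> b" "b \<le> d" "a \<le> 1" "b \<le> 1"
    unfolding a_def b_def c_def d_def using x2 x3 by (auto intro!: divide_left_mono)
  have "real Vi * c + real (V - Vi) * d \<le> 8 * h / (x - 1)"
    unfolding c_def d_def using N h Vi V
    by (intro token_weight_bound) (auto simp: x_def)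
  moreover have "real Vi * a + real (V - Vi) * b \<le> real Vi * c + real (V - Vi) * d"
    using ab by (intro add_mono mult_left_mono) auto
  ultimately have weights: "real Vi * a + real (V - Vi) * b \<le> s" "real Vi * c + real (V - Vi) * d \<le> ln (1 + s)"
    using s unfolding x_def by linarith+
  have "1 - s \<le> (1 - a) ^ Vi * (1 - b) ^ (V - Vi)"
    using one_minus_power_mult_ge[of a b Vi "V - Vi"] ab weights(1) by linarith
  then show "1 - s \<le> xi0 N V Vi" by (simp add: xi0_def a_def b_def x_def)
  have "0 < s" using s(1) N h by (smt (verit) divide_pos_pos)
  have "(1 + c) ^ Vi * (1 + d) ^ (V - Vi) \<le> exp (ln (1 + s))"
    using one_plus_power_mult_le_exp[of c d Vi "V - Vi"] ab weights(2) by (smt (verit) exp_le_cancel_iff)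
  then show "xi1 N V Vi \<le> 1 + s" using \<open>0 < s\<close> by (simp add: xi1_def c_def d_def x_def)
qed

lemma card_tokens_le:
  assumes "S \<subseteq> agents N" and "real K \<le> c"
  shows "real (card (tokens S K)) \<le> c * real N"
proof -
  have "finite S" using assms(1) finite_subset by (auto simp: agents_def)
  moreover have "card S \<le> N" using card_mono[of "agents N" S] assms(1) by (simp add: agents_def)
  moreover have "0 \<le> c" using assms(2) of_nat_0_le_iff order_trans by blast
  ultimately show ?thesis
    using mult_mono[OF assms(2), of "card S" N] by (simp add: tokens_def card_cartesian_product mult.commute)
qed

lemma expected_tokens_at_le:
  assumes walk_le: "\<And>u. u \<in> agents N \<Longrightarrow> walkprob E N L u i \<le> 1 / real N + 1 / real N ^ 3"
    and S: "S \<subseteq> agents N" and N: "10 \<le> real N" and K: "real K \<le> c"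
  shows "(\<Sum>t\<in>tokens S K. walkprob E N L (fst t) i) \<le> c * (101 / 100)"
proof -
  define x where "x = real N"
  have "0 \<le> c" using K of_nat_0_le_iff order_trans by blast
  have "fst t \<in> agents N" if "t \<in> tokens S K" for t
    using that S by (auto simp: tokens_def)
  then have "(\<Sum>t\<in>tokens S K. walkprob E N L (fst t) i) \<le> (\<Sum>t\<in>tokens S K. 1 / x + 1 / x ^ 3)"
    using walk_le unfolding x_def by (intro sum_mono) blast
  also have "\<dots> = real (card (tokens S K)) * (1 / x + 1 / x ^ 3)" by simp
  also have "\<dots> \<le> c * x * (1 / x + 1 / x ^ 3)"
    using card_tokens_le[OF S K] N by (intro mult_right_mono) (auto simp: x_def)
  also have "\<dots> = c * (1 + 1 / x\<^sup>2)"
    using N by (simp add: x_def field_simps power2_eq_square power3_eq_cube)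
  also have "\<dots> \<le> c * (101 / 100)"
    using \<open>0 \<le> c\<close> N mult_mono[OF N N]
    by (intro mult_left_mono) (auto simp: x_def divide_simps power2_eq_square)
  finally show ?thesis .
qed

lemma ends_prob_few_tokens_at:
  fixes h :: real
  assumes irrefl: "\<And>a. \<not> E a a"
    and mixing: "\<And>u j. u \<in> agents N \<Longrightarrow> j \<in> agents N \<Longrightarrow>
        1 / real N - 1 / real N ^ 3 \<le> walkprob E N L u j \<and>
        walkprob E N L u j \<le> 1 / real N + 1 / real N ^ 3"
    and S: "S \<subseteq> agents N" and i: "i \<in> agents N"
    and N: "10 \<le> real N" and h: "176 \<le> h" and K: "real K \<le> h * real N + 1"
    and P: "\<And>f. real (card {t \<in> tokens S K. f t = i}) \<le> 2 * h * real N \<Longrightarrow> P f"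
  shows "1 - 1 / real N ^ 10 \<le> ends_prob E N L S K P"
proof -
  define x where "x = real N"
  define \<mu> where "\<mu> = (\<Sum>t\<in>tokens S K. walkprob E N L (fst t) i)"
  have fin: "finite (agents N)" "finite (tokens S K)"
    using S finite_subset by (auto simp: agents_def tokens_def)
  have start: "fst t \<in> agents N" if "t \<in> tokens S K" for t
    using that S by (auto simp: tokens_def)
  have "1 / x ^ 3 \<le> 1 / x ^ 1" using N by (intro divide_left_mono power_increasing) (auto simp: x_def)
  then have walk_nonneg: "0 \<le> walkprob E N L u j" if "u \<in> agents N" "j \<in> agents N" for u j
    using mixing[OF that] by (simp add: x_def)
  have "\<mu> \<le> (h * x + 1) * (101 / 100)"
    unfolding \<mu>_def x_def using mixing i by (intro expected_tokens_at_le[OF _ S N K]) blast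
  then have "\<mu> \<le> (102 / 100) * (h * x)"
    using mult_mono[OF h N] h by (simp add: x_def)
  moreover have "0 \<le> \<mu>"
    unfolding \<mu>_def using walk_nonneg[OF start i] by (intro sum_nonneg)
  moreover have "exp 1 - 1 \<le> (172 / 100 :: real)" using e_less_272 by simp
  ultimately have "(exp 1 - 1) * \<mu> \<le> (172 / 100) * ((102 / 100) * (h * x))"
    by (intro mult_mono) auto
  then have "(exp 1 - 1) * \<mu> - 2 * h * x \<le> - 10 * x"
    using mult_right_mono[OF h, of x] N unfolding x_def by linarith
  then have "exp ((exp 1 - 1) * \<mu> - 2 * h * x) \<le> exp (- 10 * x)" by simp
  also have "\<dots> = 1 / exp x ^ 10" by (simp add: exp_minus exp_of_nat_mult[symmetric] field_simps)
  also have "\<dots> \<le> 1 / x ^ 10"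
    using N exp_ge_add_one_self[of x]
    by (intro divide_left_mono power_mono) (auto simp: x_def simp del: exp_ge_add_one_self)
  finally have tail: "exp ((exp 1 - 1) * \<mu> - 2 * h * x) \<le> 1 / x ^ 10" .
  have "1 - exp ((exp 1 - 1) * \<mu> - 1 * (2 * h * x)) \<le> ends_prob E N L S K P"
    unfolding ends_prob_def \<mu>_def
  proof (rule chernoff_PiE_count[OF fin(2,1) i])
    show "0 \<le> walkprob E N L (fst t) j" if "t \<in> tokens S K" "j \<in> agents N" for t j
      using walk_nonneg[OF start[OF that(1)] that(2)] .
    show "(\<Sum>j\<in>agents N. walkprob E N L (fst t) j) = 1" if "t \<in> tokens S K" for t
      using walkprob_row_sum[OF irrefl start[OF that]] .
  qed (use P in \<open>auto simp: x_def\<close>)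
  then show ?thesis using tail by (simp add: x_def)
qed

lemma real_nat_ceiling_le:
  fixes y c :: real
  assumes "y < c" and "0 \<le> c"
  shows "real (nat \<lceil>y\<rceil>) \<le> c + 1"
proof (cases "0 \<le> y")
  case True
  then have "real (nat \<lceil>y\<rceil>) = of_int \<lceil>y\<rceil>" by simp
  then show ?thesis using assms(1) by linarith
qed (use assms(2) in simp)

lemma ends_prob_xi_bounds:
  fixes h s :: real
  assumes irrefl: "\<And>a. \<not> E a a"
    and mixing: "\<And>u j. u \<in> agents N \<Longrightarrow> j \<in> agents N \<Longrightarrow>
        1 / real N - 1 / real N ^ 3 \<le> walkprob E N L u j \<and>
        walkprob E N L u j \<le> 1 / real N + 1 / real N ^ 3"
    and S: "S \<subseteq> agents N" and i: "i \<in> agents N"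
    and N: "10 \<le> real N" and h: "176 \<le> h" and K: "real K \<le> h * real N + 1"
    and s: "8 * h / (real N - 1) \<le> s" "8 * h / (real N - 1) \<le> ln (1 + s)"
  shows "1 - 1 / real N ^ 10 \<le> ends_prob E N L S K (\<lambda>f.
           1 - s \<le> xi0 N (K * card S) (card {t \<in> tokens S K. f t = i}) \<and>
           xi1 N (K * card S) (card {t \<in> tokens S K. f t = i}) \<le> 1 + s)"
proof (rule ends_prob_few_tokens_at[OF irrefl mixing S i N h K])
  fix f assume "real (card {t \<in> tokens S K. f t = i}) \<le> 2 * h * real N"
  moreover have "finite (tokens S K)" "card (tokens S K) = K * card S"
    using S finite_subset by (auto simp: agents_def tokens_def card_cartesian_product)
  then have "card {t \<in> tokens S K. f t = i} \<le> K * card S"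
    by (metis (no_types, lifting) card_mono mem_Collect_eq subsetI)
  moreover have "real (K * card S) \<le> (h * real N + 1) * real N"
    using card_tokens_le[OF S K] \<open>card (tokens S K) = K * card S\<close> by simp
  ultimately show "1 - s \<le> xi0 N (K * card S) (card {t \<in> tokens S K. f t = i}) \<and>
      xi1 N (K * card S) (card {t \<in> tokens S K. f t = i}) \<le> 1 + s"
    using xi0_xi1_bounds[OF N _ _ _ _ s] h by simp
qed

lemma large_N_consequences:
  fixes N :: nat and h :: real
  defines "s \<equiv> sqrt (5 * ln (real N) / real N)"
  assumes N: "1 \<le> N" and h: "4 \<le> h"
    and N2: "(real N - 1) * sqrt (ln (real N) / real N) \<ge> 8 * h / sqrt 5"
    and N3: "(real N - 3/2) * ln (1 + s) \<ge> 8 * h"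
  shows "10 \<le> real N" and "8 * h / (real N - 1) \<le> s" and "8 * h / (real N - 1) \<le> ln (1 + s)"
proof -
  have ln_N: "0 \<le> ln (real N)" "ln (real N) \<le> real N"
    using N ln_le_minus_one[of "real N"] by auto
  then have "5 * ln (real N) / real N \<le> 3\<^sup>2" using N by (simp add: divide_le_eq)
  then have "0 \<le> s" "s \<le> 3"
    unfolding s_def using ln_N N real_sqrt_le_mono[of _ "3\<^sup>2"] by auto
  then have ln_s: "0 \<le> ln (1 + s)" "ln (1 + s) \<le> 3"
    using ln_add_one_self_le_self[of s] by auto
  have "0 < real N - 3/2"
  proof (rule ccontr)
    assume "\<not> 0 < real N - 3/2"
    then have "(real N - 3/2) * ln (1 + s) \<le> 0" using ln_s(1) by (simp add: mult_nonpos_nonneg)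
    then show False using N3 h by linarith
  qed
  then have "(real N - 3/2) * ln (1 + s) \<le> (real N - 3/2) * 3" using ln_s(2) by (intro mult_left_mono) auto
  then have "8 * h \<le> 3 * real N - 9/2" using N3 by (simp add: algebra_simps)
  then show N10: "10 \<le> real N" using h by linarith
  have "sqrt 5 * (8 * h / sqrt 5) \<le> sqrt 5 * ((real N - 1) * sqrt (ln (real N) / real N))"
    using N2 by (intro mult_left_mono) auto
  moreover have "s = sqrt 5 * sqrt (ln (real N) / real N)"
    unfolding s_def by (simp add: real_sqrt_mult[symmetric])
  ultimately have "8 * h \<le> (real N - 1) * s" by (simp add: ac_simps)
  then show "8 * h / (real N - 1) \<le> s" using N10 by (simp add: divide_le_eq mult.commute)
  have "(real N - 3/2) * ln (1 + s) \<le> (real N - 1) * ln (1 + s)"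
    using ln_s(1) by (intro mult_right_mono) auto
  then have "8 * h \<le> (real N - 1) * ln (1 + s)" using N3 by linarith
  then show "8 * h / (real N - 1) \<le> ln (1 + s)" using N10 by (simp add: divide_le_eq mult.commute)
qed

theorem lemma8:
  fixes E :: "nat \<Rightarrow> nat \<Rightarrow> bool" and N M L :: nat and g :: "nat \<Rightarrow> real"
    and \<epsilon> \<mu> \<beta> \<sigma> h :: real and Adopt :: "nat set pmf" and i :: nat
  assumes E_in: "\<And>a b. E a b \<Longrightarrow> a \<in> agents N \<and> b \<in> agents N"
    and E_sym: "\<And>a b. E a b \<Longrightarrow> E b a"
    and E_irrefl: "\<And>a. \<not> E a a"
    and conn: "graph_connected E N"
    and nonbip: "\<not> graph_bipartite E N"
    and M_pos: "M \<ge> 1"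
    and eps: "\<epsilon> > 0" and mu: "0 < \<mu>" "\<mu> < 1"
    and beta: "1/2 < \<beta>" "\<beta> < 1"
    and sigma: "\<sigma> \<ge> 11"
    and h_def: "h = 16 * \<sigma> / (1 - \<beta>)"
    and g_lower: "\<And>l. l > 0 \<Longrightarrow> eventually (\<lambda>n. g n > l * ln (real n)) sequentially"
    and g_upper: "\<And>l. l > 0 \<Longrightarrow> eventually (\<lambda>n. g n < l * real n) sequentially"
    and mixing: "\<And>s j. s \<in> agents N \<Longrightarrow> j \<in> agents N \<Longrightarrow>
        1 / real N - 1 / real N ^ 3 \<le> walkprob E N L s j \<and>
        walkprob E N L s j \<le> 1 / real N + 1 / real N ^ 3"
    and N1: "g N < real N"
    and N2: "(real N - 1) * sqrt (ln (real N) / real N) \<ge> 8 * h / sqrt 5"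
    and N3: "(real N - 3/2) * ln (1 + sqrt (5 * ln (real N) / real N)) \<ge> 8 * h"
    and adopt: "set_pmf Adopt \<subseteq> Pow (agents N)"
    and i_in: "i \<in> agents N"
  shows "measure_pmf.expectation Adopt
           (\<lambda>S. let K = nat \<lceil>h * g N\<rceil> in
              ends_prob E N L S K
                (\<lambda>f. let V = K * card S; Vi = card {t \<in> tokens S K. f t = i} in
                     xi0 N V Vi \<ge> 1 - sqrt (5 * ln (real N) / real N) \<and>
                     xi1 N V Vi \<le> 1 + sqrt (5 * ln (real N) / real N)))
         \<ge> 1 - (6 * real M + 3) / real N ^ 10"
proof -
  define s where "s = sqrt (5 * ln (real N) / real N)"
  have "16 * \<sigma> \<le> h" using h_def beta sigma by (simp add: le_divide_eq)
  then have h: "176 \<le> h" using sigma by linarith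
  have "1 \<le> N" using i_in by (simp add: agents_def)
  moreover have "4 \<le> h" using h by simp
  ultimately have N_large: "10 \<le> real N" "8 * h / (real N - 1) \<le> s" "8 * h / (real N - 1) \<le> ln (1 + s)"
    using large_N_consequences[of N h] N2 N3 unfolding s_def by blast+
  have "real (nat \<lceil>h * g N\<rceil>) \<le> h * real N + 1"
    using N1 h by (intro real_nat_ceiling_le mult_strict_left_mono) auto
  note ends_bound = ends_prob_xi_bounds[OF E_irrefl mixing _ i_in N_large(1) h this N_large(2,3)]
  have weaker_tail: "1 / real N ^ 10 \<le> (6 * real M + 3) / real N ^ 10" by (intro divide_right_mono) auto
  have per_S: "1 - (6 * real M + 3) / real N ^ 10 \<le> (let K = nat \<lceil>h * g N\<rceil> in
      ends_prob E N L S K (\<lambda>f. let V = K * card S; Vi = card {t \<in> tokens S K. f t = i} in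
        1 - s \<le> xi0 N V Vi \<and> xi1 N V Vi \<le> 1 + s))" if "S \<in> set_pmf Adopt" for S
    using ends_bound[of S] weaker_tail that adopt unfolding Let_def
    by (meson Pow_iff order_trans diff_left_mono subsetD)
  have "finite (set_pmf Adopt)"
    using adopt finite_subset by (auto simp: agents_def)
  from measure_pmf.integral_ge_const[OF integrable_measure_pmf_finite[OF this] AE_pmfI[OF per_S]]
  show ?thesis unfolding s_def .
qed

end
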